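(* Let $S$ and $T$ be pointed sets and $n\in\mathbb{N}$. There is a bijection $\mathrm{Hist}^n(S,T)\cong\mathrm{Hist}^n_{strm}(S,T)$.
   Context: For a set $S$, $\mathrm{List}(S)=\coprod_{t\in\mathbb{N}}S^t$ is the set of finite lists (length $|\ell|=t\geq0$); for $|\ell|\geq1$, $\partial\ell$ drops the last entry. An $n$-historical propagator from $S$ to $T$ is a function $f\colon\mathrm{List}(S)\to\mathrm{List}(T)$ with $|f(\ell)|=|\ell|+n$ for all $\ell$ and $\partial f(\ell)=f(\partial\ell)$ whenever $|\ell|\geq1$; $\mathrm{Hist}^n(S,T)$ is the set of these. An $S$-stream is a function $\sigma\colon\mathbb{N}_{\geq1}\to S$; $\mathrm{Strm}(S)$ is the set of $S$-streams, and for $t\in\mathbb{N}$, $\sigma|_t\in\mathrm{List}(S)$ is the list $[\sigma(1),\dots,\sigma(t)]$. A function $F\colon\mathrm{Strm}(S)\to\mathrm{Strm}(T)$ is an $n$-historical stream propagator if for all $t\in\mathbb{N}$ and all $\sigma,\sigma'\in\mathrm{Strm}(S)$ with $\sigma|_t=\sigma'|_t$ one has $F(\sigma)|_{t+n}=F(\sigma')|_{t+n}$; $\mathrm{Hist}^n_{strm}(S,T)$ is the set of these. *)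

theory Defs
  imports "HOL-Library.FuncSet"
begin

text \<open>S-streams: functions on the positive naturals with values in S
 (extensional: value undefined at 0).\<close>
definition Strm :: "'a set \<Rightarrow> (nat \<Rightarrow> 'a) set" where
  "Strm S = {1..} \<rightarrow>\<^sub>E S"

definition trunc :: "(nat \<Rightarrow> 'a) \<Rightarrow> nat \<Rightarrow> 'a list" where
  "trunc \<sigma> t = map \<sigma> [1..<Suc t]"

definition Hist :: "nat \<Rightarrow> 'a set \<Rightarrow> 'b set \<Rightarrow> ('a list \<Rightarrow> 'b list) set" where
  "Hist n S T = {f \<in> lists S \<rightarrow>\<^sub>E lists T.
      (\<forall>l \<in> lists S. length (f l) = length l + n) \<and>
      (\<forall>l \<in> lists S. l \<noteq> [] \<longrightarrow> butlast (f l) = f (butlast l))}"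

definition Hist_strm :: "nat \<Rightarrow> 'a set \<Rightarrow> 'b set \<Rightarrow> ((nat \<Rightarrow> 'a) \<Rightarrow> (nat \<Rightarrow> 'b)) set" where
  "Hist_strm n S T = {F \<in> Strm S \<rightarrow>\<^sub>E Strm T.
      \<forall>t \<sigma> \<sigma>'. \<sigma> \<in> Strm S \<longrightarrow> \<sigma>' \<in> Strm S \<longrightarrow> trunc \<sigma> t = trunc \<sigma>' t
        \<longrightarrow> trunc (F \<sigma>) (t + n) = trunc (F \<sigma>') (t + n)}"

end

theory Submission
  imports Defs
begin

text \<open>A stream propagator F restricts to lists by padding a list l with the base point of S
  and reading off the first |l| + n outputs; causality makes the result independent of the
  padding and compatible with dropping the last entry. Conversely a list propagator f defines
  a stream propagator whose k-th output is the k-th entry of f applied to the first k inputs;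
  since f (take m l) is the prefix of length m + n of f l, truncating that stream at t + n
  recovers f applied to the first t inputs. The two constructions are mutually inverse.\<close>

lemma length_trunc [simp]: "length (trunc \<sigma> t) = t"
  by (simp add: trunc_def)

lemma nth_trunc [simp]: "i < t \<Longrightarrow> trunc \<sigma> t ! i = \<sigma> (Suc i)"
  by (simp add: trunc_def nth_upt del: upt_Suc)

lemma trunc_eq_iff: "trunc \<sigma> t = trunc \<sigma>' t \<longleftrightarrow> (\<forall>k. 1 \<le> k \<and> k \<le> t \<longrightarrow> \<sigma> k = \<sigma>' k)"
  unfolding trunc_def map_eq_conv by (auto simp del: upt_Suc)

lemma take_trunc: "m \<le> t \<Longrightarrow> take m (trunc \<sigma> t) = trunc \<sigma> m"
  by (rule nth_equalityI) auto

lemma trunc_in_lists: "\<sigma> \<in> Strm S \<Longrightarrow> trunc \<sigma> t \<in> lists S"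
  unfolding trunc_def Strm_def by (auto simp del: upt_Suc simp: PiE_def Pi_def)

definition stream_of_list :: "'a \<Rightarrow> 'a list \<Rightarrow> nat \<Rightarrow> 'a" where
  "stream_of_list s0 l = (\<lambda>k\<in>{1..}. if k \<le> length l then l ! (k - 1) else s0)"

lemma stream_of_list_in_Strm: "s0 \<in> S \<Longrightarrow> l \<in> lists S \<Longrightarrow> stream_of_list s0 l \<in> Strm S"
  unfolding stream_of_list_def Strm_def by auto

lemma trunc_stream_of_list [simp]: "trunc (stream_of_list s0 l) (length l) = l"
  by (rule nth_equalityI) (auto simp: stream_of_list_def)

lemma trunc_stream_of_butlast:
  "trunc (stream_of_list s0 (butlast l)) (length l - 1) = trunc (stream_of_list s0 l) (length l - 1)"
  unfolding trunc_eq_iff by (auto simp: stream_of_list_def nth_butlast)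

lemma HistI:
  assumes "\<And>l. l \<in> lists S \<Longrightarrow> f l \<in> lists T"
    and "\<And>l. l \<notin> lists S \<Longrightarrow> f l = undefined"
    and "\<And>l. l \<in> lists S \<Longrightarrow> length (f l) = length l + n"
    and "\<And>l. l \<in> lists S \<Longrightarrow> l \<noteq> [] \<Longrightarrow> butlast (f l) = f (butlast l)"
  shows "f \<in> Hist n S T"
  unfolding Hist_def using assms by (auto intro: PiE_I)

lemma Hist_in_lists: "f \<in> Hist n S T \<Longrightarrow> l \<in> lists S \<Longrightarrow> f l \<in> lists T"
  by (auto simp: Hist_def)

lemma Hist_undefined: "f \<in> Hist n S T \<Longrightarrow> l \<notin> lists S \<Longrightarrow> f l = undefined"
  unfolding Hist_def by (blast intro: PiE_arb)

lemma Hist_length: "f \<in> Hist n S T \<Longrightarrow> l \<in> lists S \<Longrightarrow> length (f l) = length l + n"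
  unfolding Hist_def by blast

lemma Hist_butlast:
  "f \<in> Hist n S T \<Longrightarrow> l \<in> lists S \<Longrightarrow> l \<noteq> [] \<Longrightarrow> butlast (f l) = f (butlast l)"
  unfolding Hist_def by blast

lemma Hist_take:
  assumes f: "f \<in> Hist n S T"
  shows "l \<in> lists S \<Longrightarrow> m \<le> length l \<Longrightarrow> f (take m l) = take (m + n) (f l)"
proof (induction l arbitrary: m rule: rev_induct)
  case Nil
  then show ?case using Hist_length[OF f, of "[]"] by simp
next
  case (snoc x l)
  have l: "l \<in> lists S" using snoc.prems by simp
  have length_f: "length (f (l @ [x])) = length l + 1 + n"
    using Hist_length[OF f snoc.prems(1)] by simp
  have "f l = butlast (f (l @ [x]))"
    using Hist_butlast[OF f snoc.prems(1)] by simp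
  then have f_l: "f l = take (length l + n) (f (l @ [x]))"
    using length_f by (simp add: butlast_conv_take)
  show ?case
  proof (cases "m = length l + 1")
    case True
    then show ?thesis using length_f by simp
  next
    case False
    then have m: "m \<le> length l" using snoc.prems by simp
    then have "f (take m (l @ [x])) = take (m + n) (f l)" using snoc.IH[OF l] by simp
    also have "\<dots> = take (m + n) (f (l @ [x]))" using f_l m by (simp add: min_def)
    finally show ?thesis .
  qed
qed

lemma Hist_nth_trunc_eq:
  assumes f: "f \<in> Hist n S T" and \<sigma>: "\<sigma> \<in> Strm S" and "i < m + n" "i < m' + n"
  shows "f (trunc \<sigma> m) ! i = f (trunc \<sigma> m') ! i"
proof -
  have prefix: "f (trunc \<sigma> p) ! i = f (trunc \<sigma> q) ! i" if "p \<le> q" "i < p + n" for p q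
  proof -
    have "f (trunc \<sigma> p) = take (p + n) (f (trunc \<sigma> q))"
      using Hist_take[OF f trunc_in_lists[OF \<sigma>], of p q] that by (simp add: take_trunc)
    then show ?thesis using that by simp
  qed
  show ?thesis
  proof (cases "m \<le> m'")
    case True
    then show ?thesis using prefix assms(3) by blast
  next
    case False
    then show ?thesis using prefix[of m' m] assms(4) by simp
  qed
qed

lemma Hist_strmI:
  assumes "\<And>\<sigma>. \<sigma> \<in> Strm S \<Longrightarrow> F \<sigma> \<in> Strm T"
    and "\<And>\<sigma>. \<sigma> \<notin> Strm S \<Longrightarrow> F \<sigma> = undefined"
    and "\<And>t \<sigma> \<sigma>'. \<sigma> \<in> Strm S \<Longrightarrow> \<sigma>' \<in> Strm S \<Longrightarrow> trunc \<sigma> t = trunc \<sigma>' t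
           \<Longrightarrow> trunc (F \<sigma>) (t + n) = trunc (F \<sigma>') (t + n)"
  shows "F \<in> Hist_strm n S T"
  unfolding Hist_strm_def using assms by (blast intro: PiE_I)

lemma Hist_strm_in_Strm: "F \<in> Hist_strm n S T \<Longrightarrow> \<sigma> \<in> Strm S \<Longrightarrow> F \<sigma> \<in> Strm T"
  by (auto simp: Hist_strm_def)

lemma Hist_strm_undefined: "F \<in> Hist_strm n S T \<Longrightarrow> \<sigma> \<notin> Strm S \<Longrightarrow> F \<sigma> = undefined"
  unfolding Hist_strm_def by (blast intro: PiE_arb)

lemma Hist_strm_trunc_eq:
  "F \<in> Hist_strm n S T \<Longrightarrow> \<sigma> \<in> Strm S \<Longrightarrow> \<sigma>' \<in> Strm S \<Longrightarrow> trunc \<sigma> t = trunc \<sigma>' t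
    \<Longrightarrow> trunc (F \<sigma>) (t + n) = trunc (F \<sigma>') (t + n)"
  unfolding Hist_strm_def by blast

lemma Strm_undefined: "\<tau> \<in> Strm T \<Longrightarrow> k \<notin> {1..} \<Longrightarrow> \<tau> k = undefined"
  unfolding Strm_def by (rule PiE_arb)

definition stream_propagator :: "'a set \<Rightarrow> ('a list \<Rightarrow> 'b list) \<Rightarrow> (nat \<Rightarrow> 'a) \<Rightarrow> nat \<Rightarrow> 'b" where
  "stream_propagator S f = (\<lambda>\<sigma>\<in>Strm S. \<lambda>k\<in>{1..}. f (trunc \<sigma> k) ! (k - 1))"

definition list_propagator ::
    "nat \<Rightarrow> 'a set \<Rightarrow> 'a \<Rightarrow> ((nat \<Rightarrow> 'a) \<Rightarrow> nat \<Rightarrow> 'b) \<Rightarrow> 'a list \<Rightarrow> 'b list" where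
  "list_propagator n S s0 F = (\<lambda>l\<in>lists S. trunc (F (stream_of_list s0 l)) (length l + n))"

lemma trunc_stream_propagator:
  assumes f: "f \<in> Hist n S T" and \<sigma>: "\<sigma> \<in> Strm S"
  shows "trunc (stream_propagator S f \<sigma>) (t + n) = f (trunc \<sigma> t)"
proof (rule nth_equalityI)
  show "length (trunc (stream_propagator S f \<sigma>) (t + n)) = length (f (trunc \<sigma> t))"
    using Hist_length[OF f trunc_in_lists[OF \<sigma>]] by simp
next
  fix i assume "i < length (trunc (stream_propagator S f \<sigma>) (t + n))"
  then show "trunc (stream_propagator S f \<sigma>) (t + n) ! i = f (trunc \<sigma> t) ! i"
    using \<sigma> Hist_nth_trunc_eq[OF f \<sigma>, of i "Suc i" t] by (simp add: stream_propagator_def)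
qed

lemma stream_propagator_in_Hist_strm:
  assumes f: "f \<in> Hist n S T"
  shows "stream_propagator S f \<in> Hist_strm n S T"
proof (rule Hist_strmI)
  fix \<sigma> assume \<sigma>: "\<sigma> \<in> Strm S"
  have "f (trunc \<sigma> k) ! (k - 1) \<in> T" if "1 \<le> k" for k
  proof -
    have "k - 1 < length (f (trunc \<sigma> k))"
      using Hist_length[OF f trunc_in_lists[OF \<sigma>]] that by simp
    then have "f (trunc \<sigma> k) ! (k - 1) \<in> set (f (trunc \<sigma> k))" by (rule nth_mem)
    then show ?thesis using Hist_in_lists[OF f trunc_in_lists[OF \<sigma>]] by blast
  qed
  then show "stream_propagator S f \<sigma> \<in> Strm T"
    using \<sigma> by (auto simp: stream_propagator_def Strm_def)
next
  fix t \<sigma> \<sigma>' assume "\<sigma> \<in> Strm S" "\<sigma>' \<in> Strm S" "trunc \<sigma> t = trunc \<sigma>' t"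
  then show "trunc (stream_propagator S f \<sigma>) (t + n) = trunc (stream_propagator S f \<sigma>') (t + n)"
    by (simp add: trunc_stream_propagator[OF f])
qed (simp add: stream_propagator_def)

lemma list_propagator_in_Hist:
  assumes F: "F \<in> Hist_strm n S T" and s0: "s0 \<in> S"
  shows "list_propagator n S s0 F \<in> Hist n S T"
proof (rule HistI)
  fix l assume "l \<in> lists S"
  then show "list_propagator n S s0 F l \<in> lists T"
    using Hist_strm_in_Strm[OF F stream_of_list_in_Strm[OF s0]]
    by (simp add: list_propagator_def trunc_in_lists)
next
  fix l assume l: "l \<in> lists S" "l \<noteq> []"
  have bl: "butlast l \<in> lists S" using l by (auto dest: in_set_butlastD)
  have "length l + n - 1 = length l - 1 + n" using l(2) by (cases l) auto
  then have "butlast (list_propagator n S s0 F l) = trunc (F (stream_of_list s0 l)) (length l - 1 + n)"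
    using l(1) by (simp only: list_propagator_def restrict_apply' butlast_conv_take length_trunc)
      (simp add: take_trunc)
  also have "\<dots> = trunc (F (stream_of_list s0 (butlast l))) (length l - 1 + n)"
    by (rule Hist_strm_trunc_eq[OF F stream_of_list_in_Strm[OF s0 bl] stream_of_list_in_Strm[OF s0 l(1)]
        trunc_stream_of_butlast, symmetric])
  also have "\<dots> = list_propagator n S s0 F (butlast l)"
    using bl by (simp add: list_propagator_def)
  finally show "butlast (list_propagator n S s0 F l) = list_propagator n S s0 F (butlast l)" .
next
  fix l :: "'a list" assume "l \<notin> lists S"
  then show "list_propagator n S s0 F l = undefined" by (simp add: list_propagator_def)
next
  fix l assume "l \<in> lists S"
  then show "length (list_propagator n S s0 F l) = length l + n" by (simp add: list_propagator_def)
qed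

lemma list_propagator_stream_propagator:
  assumes f: "f \<in> Hist n S T" and s0: "s0 \<in> S"
  shows "list_propagator n S s0 (stream_propagator S f) = f"
proof
  fix l
  show "list_propagator n S s0 (stream_propagator S f) l = f l"
  proof (cases "l \<in> lists S")
    case True
    have "list_propagator n S s0 (stream_propagator S f) l
        = trunc (stream_propagator S f (stream_of_list s0 l)) (length l + n)"
      using True by (simp add: list_propagator_def)
    also have "\<dots> = f l"
      using trunc_stream_propagator[OF f stream_of_list_in_Strm[OF s0 True], of "length l"] by simp
    finally show ?thesis .
  next
    case False
    then show ?thesis by (simp add: list_propagator_def Hist_undefined[OF f])
  qed
qed

lemma stream_propagator_list_propagator:
  assumes F: "F \<in> Hist_strm n S T" and s0: "s0 \<in> S"
  shows "stream_propagator S (list_propagator n S s0 F) = F"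
proof
  fix \<sigma>
  show "stream_propagator S (list_propagator n S s0 F) \<sigma> = F \<sigma>"
  proof (cases "\<sigma> \<in> Strm S")
    case \<sigma>: True
    show ?thesis
    proof
      fix k
      show "stream_propagator S (list_propagator n S s0 F) \<sigma> k = F \<sigma> k"
      proof (cases "k \<in> {1..}")
        case k: True
        have \<sigma>_k: "trunc \<sigma> k \<in> lists S" by (rule trunc_in_lists[OF \<sigma>])
        have "trunc (F (stream_of_list s0 (trunc \<sigma> k))) (k + n) = trunc (F \<sigma>) (k + n)"
          using Hist_strm_trunc_eq[OF F stream_of_list_in_Strm[OF s0 \<sigma>_k] \<sigma>]
            trunc_stream_of_list[of s0 "trunc \<sigma> k"] by simp
        then have "list_propagator n S s0 F (trunc \<sigma> k) = trunc (F \<sigma>) (k + n)"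
          using \<sigma>_k by (simp add: list_propagator_def)
        then show ?thesis
          using \<sigma> k by (simp add: stream_propagator_def)
      qed (simp add: stream_propagator_def \<sigma> Strm_undefined[OF Hist_strm_in_Strm[OF F \<sigma>]])
    qed
  qed (simp add: stream_propagator_def Hist_strm_undefined[OF F])
qed

theorem proposition3p9:
  fixes S :: "'a set" and T :: "'b set" and s0 :: 'a and t0 :: 'b and n :: nat
  assumes "s0 \<in> S" and "t0 \<in> T"
  shows "\<exists>\<Phi>. bij_betw \<Phi> (Hist n S T) (Hist_strm n S T)"
proof
  show "bij_betw (stream_propagator S) (Hist n S T) (Hist_strm n S T)"
  proof (rule bij_betw_byWitness[where f' = "list_propagator n S s0"])
    show "\<forall>f\<in>Hist n S T. list_propagator n S s0 (stream_propagator S f) = f"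
      using list_propagator_stream_propagator[OF _ assms(1)] by blast
    show "\<forall>F\<in>Hist_strm n S T. stream_propagator S (list_propagator n S s0 F) = F"
      using stream_propagator_list_propagator[OF _ assms(1)] by blast
    show "stream_propagator S ` Hist n S T \<subseteq> Hist_strm n S T"
      using stream_propagator_in_Hist_strm by blast
    show "list_propagator n S s0 ` Hist_strm n S T \<subseteq> Hist n S T"
      using list_propagator_in_Hist[OF _ assms(1)] by blast
  qed
qed

end
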